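(* Let $G$ be generated by the random planted model with parameters $n,k,d,p$ where $d\le 2pk/3$, and then let a monotone adversary add arbitrary edges with both endpoints in $V\setminus S$, producing $\tilde G$. If $k\ge 6\sqrt{6n\log n/p}$, then with high probability (over the randomness of the random planted model) every vertex of $S$ has strictly smaller degree in $\tilde G$ than every vertex of $V\setminus S$; in particular, the set of $k$ vertices of smallest degree in $\tilde G$ is exactly $S$.
   Context: Random planted model with parameters $n,k,d,p$: $V$ is a set of $n$ vertices and $S\subset V$ an arbitrary subset with $|S|=k$; edges are added arbitrarily inside $S$ so that the induced graph on $S$ is a connected $d$-regular bipartite graph with parts $S_1,S_2$; each pair in $S\times(V\setminus S)$ and each pair in $(V\setminus S)\times(V\setminus S)$ is made an edge independently with probability $p$. *)

theory Defs
  imports "HOL-Probability.Probability"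
begin

text \<open>Vertices are 0..<n. Graphs are sets of 2-element edges {u,v}.\<close>

definition degree :: "nat set set \<Rightarrow> nat \<Rightarrow> nat" where
  "degree E v = card {u. {u, v} \<in> E}"

definition random_pairs :: "nat \<Rightarrow> nat set \<Rightarrow> nat set set" where
  "random_pairs n S = {{u, v} | u v. u \<noteq> v \<and> u < n \<and> v < n \<and> \<not> (u \<in> S \<and> v \<in> S)}"

text \<open>Pairs the monotone adversary may add: both endpoints outside S.\<close>
definition outside_pairs :: "nat \<Rightarrow> nat set \<Rightarrow> nat set set" where
  "outside_pairs n S = {{u, v} | u v. u \<noteq> v \<and> u < n \<and> v < n \<and> u \<notin> S \<and> v \<notin> S}"

definition planted_ok ::
  "nat \<Rightarrow> nat \<Rightarrow> nat \<Rightarrow> nat set \<Rightarrow> nat set \<Rightarrow> nat set \<Rightarrow> nat set set \<Rightarrow> bool" where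
  "planted_ok n k d S S1 S2 H \<longleftrightarrow>
     S \<subseteq> {..<n} \<and> card S = k \<and> S1 \<union> S2 = S \<and> S1 \<inter> S2 = {} \<and>
     H \<subseteq> {{u, v} | u v. u \<in> S1 \<and> v \<in> S2} \<and>
     (\<forall>v\<in>S. degree H v = d) \<and>
     (\<forall>u\<in>S. \<forall>v\<in>S. (u, v) \<in> {(x, y). {x, y} \<in> H}\<^sup>*)"

definition random_planted :: "nat \<Rightarrow> real \<Rightarrow> nat set \<Rightarrow> nat set set \<Rightarrow> nat set set pmf" where
  "random_planted n p S H =
     map_pmf (\<lambda>f. H \<union> {e \<in> random_pairs n S. f e})
       (Pi_pmf (random_pairs n S) False (\<lambda>_. bernoulli_pmf p))"

definition good_event :: "nat \<Rightarrow> nat set \<Rightarrow> nat set set \<Rightarrow> bool" where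
  "good_event n S E \<longleftrightarrow>
     (\<forall>A. A \<subseteq> outside_pairs n S \<longrightarrow>
        (\<forall>u\<in>S. \<forall>v\<in>{..<n} - S. degree (E \<union> A) u < degree (E \<union> A) v))"

end

theory Submission
  imports Defs
begin

text \<open>Put the threshold \<open>\<theta> = p (n - 1) - t\<close> with \<open>t = p (k - 3) / 6\<close>.
  A vertex \<open>u \<in> S\<close> has degree \<open>d\<close> in the planted graph plus a \<open>Bin(n - k, p)\<close> number of random
  edges, and the adversary adds nothing at \<open>u\<close>; a vertex \<open>v \<notin> S\<close> has at least its
  \<open>Bin(n - 1, p)\<close> random edges. Since \<open>d \<le> 2pk/3\<close>, the degree of \<open>u\<close> can only reach \<open>\<theta>\<close> if
  its random degree exceeds its mean by \<open>t\<close>, and the degree of \<open>v\<close> can only drop to \<open>\<theta>\<close> if its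
  random degree falls short of its mean by \<open>t\<close>. Multiplicative Chernoff bounds make each of
  these \<open>n\<close> events have probability at most \<open>exp (- t\<^sup>2 / (4 p n))\<close>, and the assumed lower
  bound on \<open>k\<close> turns the union bound into \<open>n powr (-5/49) \<longrightarrow> 0\<close>.\<close>

lemma finite_set_Pi_pmf:
  assumes "finite A" "\<And>x. x \<in> A \<Longrightarrow> finite (set_pmf (q x))"
  shows "finite (set_pmf (Pi_pmf A dflt q))"
proof (rule finite_subset)
  show "set_pmf (Pi_pmf A dflt q) \<subseteq> PiE_dflt A dflt (set_pmf \<circ> q)"
    by (rule set_Pi_pmf_subset'[OF assms(1)])
  show "finite (PiE_dflt A dflt (set_pmf \<circ> q))"
    using assms by (intro finite_PiE_dflt) auto
qed

lemma expectation_exp_count_Pi_bernoulli: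
  fixes R C :: "'a set" and p l :: real
  assumes R: "finite R" and C: "C \<subseteq> R" and p: "0 \<le> p" "p \<le> 1"
  shows "measure_pmf.expectation (Pi_pmf R False (\<lambda>_. bernoulli_pmf p))
           (\<lambda>f. exp (l * card {e\<in>C. f e})) = (1 - p + p * exp l) ^ card C"
proof -
  define g where "g = (\<lambda>e (b::bool). if e \<in> C \<and> b then exp l else 1)"
  have prod_g: "exp (l * card {e\<in>C. f e}) = (\<Prod>e\<in>R. g e (f e))" for f
  proof -
    have "(\<Prod>e\<in>R. g e (f e)) = (\<Prod>e\<in>{e\<in>C. f e}. exp l)"
      unfolding g_def using R C by (intro prod.mono_neutral_cong_right) auto
    then show ?thesis by (simp add: exp_of_nat_mult[symmetric] mult.commute)
  qed
  have "measure_pmf.expectation (Pi_pmf R False (\<lambda>_. bernoulli_pmf p))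
          (\<lambda>f. \<Prod>e\<in>R. g e (f e))
      = (\<Prod>e\<in>R. measure_pmf.expectation (bernoulli_pmf p) (g e))"
    by (rule expectation_prod_Pi_pmf[OF R])
       (auto simp: g_def intro!: integrable_measure_pmf_finite)
  also have "\<dots> = (\<Prod>e\<in>R. if e \<in> C then 1 - p + p * exp l else 1)"
    using p by (intro prod.cong) (auto simp: g_def algebra_simps)
  also have "\<dots> = (\<Prod>e\<in>C. 1 - p + p * exp l)"
    using R C finite_subset[OF C R] by (intro prod.mono_neutral_cong_left[symmetric]) auto
  finally show ?thesis by (simp add: prod_g)
qed

lemma prob_count_Pi_bernoulli_exp_tail:
  fixes R C :: "'a set" and p l a :: real
  assumes R: "finite R" and C: "C \<subseteq> R" and p: "0 \<le> p" "p \<le> 1"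
  shows "measure_pmf.prob (Pi_pmf R False (\<lambda>_. bernoulli_pmf p))
           {f. l * a \<le> l * card {e\<in>C. f e}} \<le> exp (p * card C * (exp l - 1) - l * a)"
proof -
  let ?P = "Pi_pmf R False (\<lambda>_. bernoulli_pmf p)"
  let ?Y = "\<lambda>f. exp (l * card {e\<in>C. f e})"
  have "measure_pmf.prob ?P {f. l * a \<le> l * card {e\<in>C. f e}}
      = measure_pmf.prob ?P {f \<in> space (measure_pmf ?P). exp (l * a) \<le> ?Y f}"
    by simp
  also have "\<dots> \<le> measure_pmf.expectation ?P ?Y / exp (l * a)"
    by (rule integral_Markov_inequality_measure[where A = UNIV])
       (auto intro!: integrable_measure_pmf_finite finite_set_Pi_pmf R)
  also have "\<dots> = (1 - p + p * exp l) ^ card C / exp (l * a)"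
    by (simp add: expectation_exp_count_Pi_bernoulli[OF R C p])
  also have "\<dots> \<le> exp (p * (exp l - 1)) ^ card C / exp (l * a)"
  proof (intro divide_right_mono power_mono)
    show "1 - p + p * exp l \<le> exp (p * (exp l - 1))"
      using exp_ge_add_one_self[of "p * (exp l - 1)"] by (simp add: algebra_simps)
  qed (use p in \<open>auto intro: add_nonneg_nonneg\<close>)
  also have "\<dots> = exp (p * card C * (exp l - 1) - l * a)"
    by (simp add: exp_diff exp_of_nat_mult[symmetric] mult_ac)
  finally show ?thesis .
qed

lemma chernoff_upper_tail_Pi_bernoulli:
  fixes R C :: "'a set" and p M t :: real
  assumes R: "finite R" and C: "C \<subseteq> R" and p: "0 \<le> p" "p \<le> 1"
    and M: "0 < M" "p * card C \<le> M" and t: "0 \<le> t" "t \<le> 2 * M"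
  shows "measure_pmf.prob (Pi_pmf R False (\<lambda>_. bernoulli_pmf p))
           {f. p * card C + t \<le> card {e\<in>C. f e}} \<le> exp (- (t\<^sup>2 / (4 * M)))"
proof -
  define l where "l = t / (2 * M)"
  have l: "0 \<le> l" "l \<le> 1" using M t by (auto simp: l_def field_simps)
  have "p * card C * (exp l - 1) - l * (p * card C + t) \<le> p * card C * (l + l\<^sup>2) - l * (p * card C + t)"
    using exp_bound[OF l] p by (intro diff_right_mono mult_left_mono) auto
  also have "\<dots> \<le> M * l\<^sup>2 - l * t"
    using mult_right_mono[OF M(2), of "l\<^sup>2"] by (simp add: algebra_simps)
  also have "\<dots> = - (t\<^sup>2 / (4 * M))"
    using M by (simp add: l_def field_simps power2_eq_square)
  finally have exponent: "p * card C * (exp l - 1) - l * (p * card C + t) \<le> - (t\<^sup>2 / (4 * M))" .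
  have "{f. p * card C + t \<le> card {e\<in>C. f e}} \<subseteq> {f. l * (p * card C + t) \<le> l * card {e\<in>C. f e}}"
    using l by (auto intro: mult_left_mono)
  then have "measure_pmf.prob (Pi_pmf R False (\<lambda>_. bernoulli_pmf p)) {f. p * card C + t \<le> card {e\<in>C. f e}}
      \<le> measure_pmf.prob (Pi_pmf R False (\<lambda>_. bernoulli_pmf p)) {f. l * (p * card C + t) \<le> l * card {e\<in>C. f e}}"
    by (rule measure_pmf.finite_measure_mono) simp
  also have "\<dots> \<le> exp (p * card C * (exp l - 1) - l * (p * card C + t))"
    by (rule prob_count_Pi_bernoulli_exp_tail[OF R C p])
  finally show ?thesis using exponent by (meson exp_le_cancel_iff order_trans)
qed

lemma exp_minus_le_quadratic:
  fixes l :: real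
  assumes "0 \<le> l"
  shows "exp (- l) \<le> 1 - l + l\<^sup>2 / 2"
proof -
  have pos: "0 < 1 + l + l\<^sup>2 / 2" using assms by (simp add: add_pos_nonneg)
  have "(1 - l + l\<^sup>2 / 2) * (1 + l + l\<^sup>2 / 2) = 1 + l ^ 4 / 4"
    by (simp add: algebra_simps power2_eq_square power4_eq_xxxx)
  then have "1 \<le> (1 - l + l\<^sup>2 / 2) * (1 + l + l\<^sup>2 / 2)"
    by simp
  then have "1 / (1 + l + l\<^sup>2 / 2) \<le> 1 - l + l\<^sup>2 / 2"
    using pos by (simp add: field_simps)
  moreover have "exp (- l) \<le> 1 / (1 + l + l\<^sup>2 / 2)"
    using exp_lower_Taylor_quadratic[OF assms] pos by (simp add: exp_minus field_simps)
  ultimately show ?thesis by linarith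
qed

lemma chernoff_lower_tail_Pi_bernoulli:
  fixes R C :: "'a set" and p M t :: real
  assumes R: "finite R" and C: "C \<subseteq> R" and p: "0 \<le> p" "p \<le> 1"
    and M: "0 < M" "p * card C \<le> M" and t: "0 \<le> t"
  shows "measure_pmf.prob (Pi_pmf R False (\<lambda>_. bernoulli_pmf p))
           {f. card {e\<in>C. f e} \<le> p * card C - t} \<le> exp (- (t\<^sup>2 / (2 * M)))"
proof -
  define l where "l = t / M"
  have l: "0 \<le> l" using M t by (auto simp: l_def)
  have "p * card C * (exp (- l) - 1) - (- l) * (p * card C - t)
      \<le> p * card C * (- l + l\<^sup>2 / 2) - (- l) * (p * card C - t)"
    using exp_minus_le_quadratic[OF l] p by (intro diff_right_mono mult_left_mono) auto
  also have "\<dots> \<le> M * l\<^sup>2 / 2 - l * t"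
    using mult_right_mono[OF M(2), of "l\<^sup>2"] by (simp add: algebra_simps)
  also have "\<dots> = - (t\<^sup>2 / (2 * M))"
    using M by (simp add: l_def field_simps power2_eq_square)
  finally have exponent:
    "p * card C * (exp (- l) - 1) - (- l) * (p * card C - t) \<le> - (t\<^sup>2 / (2 * M))" .
  have "{f. card {e\<in>C. f e} \<le> p * card C - t} \<subseteq> {f. (- l) * (p * card C - t) \<le> (- l) * card {e\<in>C. f e}}"
    using l by (auto intro: mult_left_mono)
  then have "measure_pmf.prob (Pi_pmf R False (\<lambda>_. bernoulli_pmf p)) {f. card {e\<in>C. f e} \<le> p * card C - t}
      \<le> measure_pmf.prob (Pi_pmf R False (\<lambda>_. bernoulli_pmf p)) {f. (- l) * (p * card C - t) \<le> (- l) * card {e\<in>C. f e}}"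
    by (rule measure_pmf.finite_measure_mono) simp
  also have "\<dots> \<le> exp (p * card C * (exp (- l) - 1) - (- l) * (p * card C - t))"
    by (rule prob_count_Pi_bernoulli_exp_tail[OF R C p])
  finally show ?thesis using exponent by (meson exp_le_cancel_iff order_trans)
qed

lemma degree_eq_card_incident:
  assumes "\<forall>e\<in>E. \<exists>a b. e = {a, b}"
  shows "degree E w = card {e\<in>E. w \<in> e}"
proof -
  have inj: "inj_on (\<lambda>x. {x, w}) {x. {x, w} \<in> E}"
    by (auto simp: inj_on_def doubleton_eq_iff)
  have "(\<lambda>x. {x, w}) ` {x. {x, w} \<in> E} = {e\<in>E. w \<in> e}"
  proof (intro equalityI subsetI)
    fix e assume e: "e \<in> {e\<in>E. w \<in> e}"
    then obtain a b where "e = {a, b}" using assms by blast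
    with e have "e = {b, w} \<or> e = {a, w}" by blast
    then show "e \<in> (\<lambda>x. {x, w}) ` {x. {x, w} \<in> E}" using e by blast
  qed auto
  then show ?thesis unfolding degree_def using card_image[OF inj] by simp
qed

lemma degree_mono:
  assumes "E \<subseteq> F" "finite (\<Union>F)"
  shows "degree E v \<le> degree F v"
  unfolding degree_def using assms by (intro card_mono[OF finite_subset[of _ "\<Union>F"]]) auto

lemma degree_Un_le: "degree (E \<union> F) v \<le> degree E v + degree F v"
  unfolding degree_def by (simp add: Collect_disj_eq card_Un_le)

lemma degree_outside_pairs_subset:
  assumes "A \<subseteq> outside_pairs n S" "u \<in> S"
  shows "degree A u = 0"
proof -
  have "{x. {x, u} \<in> A} = {}"
    using assms unfolding outside_pairs_def by (auto simp: doubleton_eq_iff)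
  then show ?thesis unfolding degree_def by simp
qed

lemma doubleton_random_pairs: "\<forall>e\<in>random_pairs n S. \<exists>a b. e = {a, b}"
  unfolding random_pairs_def by auto

lemma doubleton_mem_random_pairs:
  "{x, w} \<in> random_pairs n S \<longleftrightarrow> x \<noteq> w \<and> x < n \<and> w < n \<and> \<not> (x \<in> S \<and> w \<in> S)"
  unfolding random_pairs_def by (auto simp: doubleton_eq_iff)

lemma Union_random_pairs_subset: "\<Union>(random_pairs n S) \<subseteq> {..<n}"
  unfolding random_pairs_def by auto

lemma finite_random_pairs: "finite (random_pairs n S)"
  by (rule finite_UnionD[OF finite_subset[OF Union_random_pairs_subset]]) simp

lemma Union_outside_pairs_subset: "\<Union>(outside_pairs n S) \<subseteq> {..<n}"
  unfolding outside_pairs_def by auto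

lemma degree_Collect_random_pairs:
  "degree {e\<in>random_pairs n S. f e} w = card {e\<in>{e\<in>random_pairs n S. w \<in> e}. f e}"
proof -
  have "degree {e\<in>random_pairs n S. f e} w = card {e\<in>{e\<in>random_pairs n S. f e}. w \<in> e}"
    using doubleton_random_pairs by (intro degree_eq_card_incident) auto
  also have "{e\<in>{e\<in>random_pairs n S. f e}. w \<in> e} = {e\<in>{e\<in>random_pairs n S. w \<in> e}. f e}"
    by auto
  finally show ?thesis .
qed

lemma card_random_pairs_incident_inside:
  assumes "S \<subseteq> {..<n}" "w \<in> S"
  shows "card {e\<in>random_pairs n S. w \<in> e} = n - card S"
proof -
  have "{x. {x, w} \<in> random_pairs n S} = {..<n} - S"
    using assms by (auto simp: doubleton_mem_random_pairs)
  then have "degree (random_pairs n S) w = n - card S"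
    using assms unfolding degree_def by (simp add: card_Diff_subset finite_subset)
  then show ?thesis by (simp add: degree_eq_card_incident[OF doubleton_random_pairs])
qed

lemma card_random_pairs_incident_outside:
  assumes "w < n" "w \<notin> S"
  shows "card {e\<in>random_pairs n S. w \<in> e} = n - 1"
proof -
  have "{x. {x, w} \<in> random_pairs n S} = {..<n} - {w}"
    using assms by (auto simp: doubleton_mem_random_pairs)
  then have "degree (random_pairs n S) w = n - 1"
    using assms unfolding degree_def by simp
  then show ?thesis by (simp add: degree_eq_card_incident[OF doubleton_random_pairs])
qed

text \<open>The adversary cannot touch vertices of \<open>S\<close> and can only raise degrees outside \<open>S\<close>,
  so it suffices to separate the degrees in the planted graph plus the random edges.\<close>

lemma good_event_if_random_degrees_separated:
  assumes planted: "planted_ok n k d S S1 S2 H" and R: "R \<subseteq> random_pairs n S"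
    and separated: "\<And>u v. u \<in> S \<Longrightarrow> v \<in> {..<n} - S \<Longrightarrow> d + degree R u < degree R v"
  shows "good_event n S (H \<union> R)"
  unfolding good_event_def
proof (intro allI impI ballI)
  fix A u v assume A: "A \<subseteq> outside_pairs n S" and u: "u \<in> S" and v: "v \<in> {..<n} - S"
  have H_inside: "\<Union>H \<subseteq> S" and Sn: "S \<subseteq> {..<n}" and deg_H: "degree H u = d"
    using planted u unfolding planted_ok_def by auto
  have "degree (H \<union> R \<union> A) u \<le> degree (H \<union> R) u + degree A u"
    by (rule degree_Un_le)
  also have "\<dots> \<le> degree H u + degree R u + degree A u"
    using degree_Un_le by (rule add_right_mono)
  also have "\<dots> = d + degree R u"
    using degree_outside_pairs_subset[OF A u] deg_H by simp
  also have "\<dots> < degree R v" using separated[OF u v] .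
  also have "\<dots> \<le> degree (H \<union> R \<union> A) v"
  proof (rule degree_mono)
    have "\<Union>(H \<union> R \<union> A) \<subseteq> \<Union>H \<union> \<Union>(random_pairs n S) \<union> \<Union>(outside_pairs n S)"
      using R A by blast
    also have "\<dots> \<subseteq> {..<n}"
      using H_inside Sn Union_random_pairs_subset Union_outside_pairs_subset by blast
    finally show "finite (\<Union>(H \<union> R \<union> A))" by (rule finite_subset) simp
  qed auto
  finally show "degree (H \<union> R \<union> A) u < degree (H \<union> R \<union> A) v" .
qed

lemma prob_good_event_ge:
  fixes n k d :: nat and p :: real and S S1 S2 :: "nat set" and H :: "nat set set"
  assumes planted: "planted_ok n k d S S1 S2 H" and p: "0 < p" "p \<le> 1"
    and d: "real d \<le> 2 * p * real k / 3" and k: "3 \<le> k"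
  shows "1 - real n * exp (- ((p * (real k - 3) / 6)\<^sup>2 / (4 * (p * n))))
           \<le> measure_pmf.prob (random_planted n p S H) {E. good_event n S E}"
proof -
  have Sn: "S \<subseteq> {..<n}" and card_S: "card S = k"
    using planted unfolding planted_ok_def by auto
  have kn: "k \<le> n" using card_mono[OF _ Sn] card_S by simp
  define RP where "RP = random_pairs n S"
  define P where "P = Pi_pmf RP False (\<lambda>_. bernoulli_pmf p)"
  define C where "C = (\<lambda>w. {e\<in>RP. w \<in> e})"
  define t where "t = p * (real k - 3) / 6"
  define M where "M = p * n"
  define bad where "bad = (\<lambda>w. if w \<in> S then {f. p * card (C w) + t \<le> card {e\<in>C w. f e}}
                                   else {f. card {e\<in>C w. f e} \<le> p * card (C w) - t})"
  have RP: "finite RP" "C w \<subseteq> RP" for w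
    unfolding RP_def C_def by (auto simp: finite_random_pairs)
  have card_C_inside: "card (C w) = n - k" if "w \<in> S" for w
    using card_random_pairs_incident_inside[OF Sn that] card_S by (simp add: C_def RP_def)
  have card_C_outside: "card (C w) = n - 1" if "w < n" "w \<notin> S" for w
    using card_random_pairs_incident_outside[OF that] by (simp add: C_def RP_def)
  have M: "0 < M" "p * card (C w) \<le> M" if "w < n" for w
  proof -
    have "card (C w) \<le> n"
      using that card_C_inside card_C_outside by (cases "w \<in> S") auto
    then show "0 < M" "p * card (C w) \<le> M"
      using p that by (auto simp: M_def)
  qed
  have t: "0 \<le> t" "t \<le> 2 * M"
    using p k kn by (auto simp: t_def M_def)
  have prob_bad: "measure_pmf.prob P (bad w) \<le> exp (- (t\<^sup>2 / (4 * M)))" if w: "w < n" for w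
  proof (cases "w \<in> S")
    case True
    then show ?thesis
      unfolding bad_def P_def
      using chernoff_upper_tail_Pi_bernoulli[OF RP p(1)[THEN less_imp_le] p(2) M[OF w] t] by simp
  next
    case False
    have "measure_pmf.prob P (bad w) \<le> exp (- (t\<^sup>2 / (2 * M)))"
      unfolding bad_def P_def
      using False chernoff_lower_tail_Pi_bernoulli[OF RP p(1)[THEN less_imp_le] p(2) M[OF w] t(1)] by simp
    also have "\<dots> \<le> exp (- (t\<^sup>2 / (4 * M)))"
      using M[OF w] by (simp add: frac_le divide_left_mono)
    finally show ?thesis .
  qed
  have good: "good_event n S (H \<union> {e\<in>RP. f e})" if "f \<notin> (\<Union>w<n. bad w)" for f
    unfolding RP_def
  proof (rule good_event_if_random_degrees_separated[OF planted])
    fix u v assume u: "u \<in> S" and v: "v \<in> {..<n} - S"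
    have "real d + card {e\<in>C u. f e} < p * card (C u) + t + real d"
      using that u Sn unfolding bad_def by force
    also have "\<dots> \<le> p * card (C v) - t"
      using d kn k v card_C_inside[OF u] card_C_outside[of v]
      by (simp add: t_def algebra_simps)
    also have "\<dots> < card {e\<in>C v. f e}"
      using that v unfolding bad_def by force
    finally show "d + degree {e\<in>random_pairs n S. f e} u < degree {e\<in>random_pairs n S. f e} v"
      by (simp add: degree_Collect_random_pairs C_def RP_def)
  qed auto
  have "measure_pmf.prob P (\<Union>w<n. bad w) \<le> (\<Sum>w<n. measure_pmf.prob P (bad w))"
    by (rule measure_pmf.finite_measure_subadditive_finite) auto
  also have "\<dots> \<le> real n * exp (- (t\<^sup>2 / (4 * M)))"
    using sum_mono[of "{..<n}", OF prob_bad] by simp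
  finally have "1 - real n * exp (- (t\<^sup>2 / (4 * M))) \<le> measure_pmf.prob P (UNIV - (\<Union>w<n. bad w))"
    using measure_pmf.prob_compl[of "\<Union>w<n. bad w" P] by simp
  also have "\<dots> \<le> measure_pmf.prob P {f. good_event n S (H \<union> {e\<in>RP. f e})}"
    using good by (intro measure_pmf.finite_measure_mono) auto
  also have "\<dots> = measure_pmf.prob (random_planted n p S H) {E. good_event n S E}"
    unfolding random_planted_def P_def RP_def by simp
  finally show ?thesis unfolding t_def M_def .
qed

lemma one_le_ln_nat: "3 \<le> n \<Longrightarrow> 1 \<le> ln (real n)"
  using exp_le ln_ge_iff by fastforce

lemma six_sqrt_ln_bound_ge_24:
  fixes n :: nat and p :: real
  assumes n: "3 \<le> n" and p: "0 < p" "p \<le> 1"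
  shows "24 \<le> 6 * sqrt (6 * real n * ln (real n) / p)"
proof -
  have "16 \<le> 6 * real n * ln (real n)"
    using mult_mono[OF _ one_le_ln_nat[OF n], of 18 "6 * real n"] n by simp
  also have "\<dots> \<le> 6 * real n * ln (real n) / p"
    using p one_le_ln_nat[OF n] by (simp add: le_divide_eq mult_left_le)
  finally show ?thesis using real_le_rsqrt[of 4] by fastforce
qed

lemma union_bound_le_powr:
  fixes n k :: nat and p :: real
  assumes n: "3 \<le> n" and p: "0 < p" "p \<le> 1"
    and k: "6 * sqrt (6 * real n * ln (real n) / p) \<le> real k"
  shows "real n * exp (- ((p * (real k - 3) / 6)\<^sup>2 / (4 * (p * n)))) \<le> real n powr (-5/49)"
proof -
  define t where "t = p * (real k - 3) / 6"
  have k24: "24 \<le> real k" using six_sqrt_ln_bound_ge_24[OF n p] k by linarith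
  have "(6 * sqrt (6 * real n * ln (real n) / p))\<^sup>2 \<le> (real k)\<^sup>2"
    using k n p one_le_ln_nat[OF n] by (intro power_mono) auto
  then have k_sq: "216 * real n * ln (real n) \<le> p * (real k)\<^sup>2"
    using p n one_le_ln_nat[OF n] by (simp add: field_simps)
  have "(p * k / 7)\<^sup>2 \<le> t\<^sup>2"
    using k24 p by (intro power_mono) (auto simp: t_def field_simps)
  then have "p * (real k)\<^sup>2 / (196 * n) \<le> t\<^sup>2 / (4 * (p * n))"
    using p n by (simp add: field_simps power2_eq_square)
  moreover have "216 / 196 * ln (real n) \<le> p * (real k)\<^sup>2 / (196 * n)"
    using k_sq n by (simp add: field_simps)
  ultimately have "real n * exp (- (t\<^sup>2 / (4 * (p * n)))) \<le> exp (ln (real n)) * exp (- (216 / 196 * ln (real n)))"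
    using n by simp
  also have "\<dots> = exp (-5/49 * ln (real n))"
    unfolding exp_add[symmetric] by simp
  also have "\<dots> = real n powr (-5/49)"
    using n by (simp add: powr_def)
  finally show ?thesis unfolding t_def .
qed

theorem lemma1p10:
  fixes k d :: "nat \<Rightarrow> nat" and p :: "nat \<Rightarrow> real"
    and S S1 S2 :: "nat \<Rightarrow> nat set" and H :: "nat \<Rightarrow> nat set set"
  assumes "\<forall>\<^sub>F n in sequentially.
      planted_ok n (k n) (d n) (S n) (S1 n) (S2 n) (H n) \<and>
      0 < p n \<and> p n \<le> 1 \<and>
      real (d n) \<le> 2 * p n * real (k n) / 3 \<and>
      real (k n) \<ge> 6 * sqrt (6 * real n * ln (real n) / p n)"
  shows "(\<lambda>n. measure_pmf.prob (random_planted n (p n) (S n) (H n))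
                 {E. good_event n (S n) E}) \<longlonglongrightarrow> 1"
proof (rule tendsto_sandwich)
  show "\<forall>\<^sub>F n in sequentially. 1 - real n powr (-5/49)
          \<le> measure_pmf.prob (random_planted n (p n) (S n) (H n)) {E. good_event n (S n) E}"
    using eventually_conj[OF assms eventually_ge_at_top[of "3::nat"]]
  proof (rule eventually_mono, elim conjE)
    fix n assume planted: "planted_ok n (k n) (d n) (S n) (S1 n) (S2 n) (H n)"
      and p: "0 < p n" "p n \<le> 1" and d: "real (d n) \<le> 2 * p n * real (k n) / 3"
      and k: "real (k n) \<ge> 6 * sqrt (6 * real n * ln (real n) / p n)" and n: "3 \<le> n"
    have "3 \<le> k n" using six_sqrt_ln_bound_ge_24[OF n p] k by linarith
    then show "1 - real n powr (-5/49)
          \<le> measure_pmf.prob (random_planted n (p n) (S n) (H n)) {E. good_event n (S n) E}"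
      using prob_good_event_ge[OF planted p d] union_bound_le_powr[OF n p k] by linarith
  qed
  show "\<forall>\<^sub>F n in sequentially. measure_pmf.prob (random_planted n (p n) (S n) (H n))
          {E. good_event n (S n) E} \<le> 1"
    by simp
  have "(\<lambda>n. real n powr (-5/49)) \<longlonglongrightarrow> 0"
    by (rule tendsto_neg_powr) (auto intro: filterlim_real_sequentially)
  then show "(\<lambda>n. 1 - real n powr (-5/49)) \<longlonglongrightarrow> 1"
    using tendsto_diff[OF tendsto_const] by fastforce
qed (rule tendsto_const)

end
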